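(* In the truncated Gale–Shapley algorithm described in the context, with a weight function $w$ respecting the preferences, for every $i\ge 2$ we have $f_i(R)\le f_{i-1}(R)$.
   Context: Instance: a simple bipartite graph $\mathcal{G}=(R\cup B,E)$ (red nodes $R$, blue nodes $B$) without isolated nodes, each node having a linear preference order on its neighbours. Algorithm (distributed Gale–Shapley): each blue $b$ keeps $p(b)$ (current partner or $\bot$), initially $\bot$. Each red $r$ keeps a list $C(r)$, initially all neighbours in decreasing preference; $c(r)$ (candidate awaiting response, or $\bot$), initially $\bot$; $p(r)$ (partner or $\bot$), initially $\bot$. Each round consists of a blue turn then a red turn. Blue turn, for each $b$: let $P$ be the set of neighbours that sent `propose'; if $P=\emptyset$ do nothing. Otherwise let $Q=P\cup\{p(b)\}$ if $p(b)\ne\bot$, else $Q=P$; let $q$ be $b$'s most preferred node in $Q$; if $q\ne p(b)$, send `break' to $p(b)$ (if $p(b)\ne\bot$), send `accept' to $q$, and set $p(b)\gets q$; send `reject' to every $r\in P\setminus\{q\}$. Red turn, for each $r$: (1) if $c(r)\neq\bot$, receive the message from $c(r)$; if `accept' set $p(r)\gets c(r)$; if `reject' remove $c(r)$ from $C(r)$; then set $c(r)\gets\bot$. (2) If $p(r)\ne\bot$ and $p(r)$ sent `break', remove $p(r)$ from $C(r)$ and set $p(r)\gets\bot$. (3) If $p(r)=\bot$ and $C(r)$ is nonempty, set $c(r)$ to the first element of $C(r)$ and send `propose' to it. Notation: a subscript $i$ denotes the value at the end of round $i$. Let $w:E\to\mathbb{Z}_{>0}$ be a weight function respecting preferences: whenever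 a node $v$ prefers $x$ over $y$, $w(\{v,x\})\ge w(\{v,y\})$. The potential of $r\in R$ at the end of round $i$ is $f_i(r)=0$ if $r$ is matched ($p_i(r)\neq\bot$) or $C_i(r)$ is empty, and otherwise $f_i(r)=w(\{r,b\})$ where $b$ is the first element of $C_i(r)$; $f_i(R)=\sum_{r\in R}f_i(r)$. *)

theory Defs
  imports Main
begin

text \<open>The linear preference
order of a node v on its neighbours is given by a list pl v containing every
neighbour exactly once, in decreasing order of preference (first = most preferred).\<close>

definition bipartite_instance ::
  "'v set \<Rightarrow> 'v set \<Rightarrow> ('v \<Rightarrow> 'v \<Rightarrow> bool) \<Rightarrow> ('v \<Rightarrow> 'v list) \<Rightarrow> bool" where
  "bipartite_instance R B adj pl \<longleftrightarrow>
     finite R \<and> finite B \<and> R \<inter> B = {} \<and>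
     (\<forall>x y. adj x y \<longrightarrow> adj y x) \<and>
     (\<forall>x y. adj x y \<longrightarrow> (x \<in> R \<and> y \<in> B) \<or> (x \<in> B \<and> y \<in> R)) \<and>
     (\<forall>v \<in> R \<union> B. \<exists>u. adj v u) \<and>
     (\<forall>v \<in> R \<union> B. distinct (pl v) \<and> set (pl v) = {u. adj v u})"

definition prefers :: "('v \<Rightarrow> 'v list) \<Rightarrow> 'v \<Rightarrow> 'v \<Rightarrow> 'v \<Rightarrow> bool" where
  "prefers pl v x y \<longleftrightarrow>
      (\<exists>i j. i < j \<and> j < length (pl v) \<and> pl v ! i = x \<and> pl v ! j = y)"

definition respects_prefs ::
  "('v \<Rightarrow> 'v \<Rightarrow> bool) \<Rightarrow> ('v \<Rightarrow> 'v list) \<Rightarrow> ('v set \<Rightarrow> int) \<Rightarrow> bool" where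
  "respects_prefs adj pl w \<longleftrightarrow>
     (\<forall>x y. adj x y \<longrightarrow> w {x, y} > 0) \<and>
     (\<forall>v x y. adj v x \<longrightarrow> adj v y \<longrightarrow> prefers pl v x y \<longrightarrow> w {v, x} \<ge> w {v, y})"

datatype msg = Propose | Accept | Reject | Break

text \<open>State at the end of a round: partner p (all nodes), list C and candidate c
(red nodes), and the set of `propose' messages (r, b) sent by red r to blue b
during the red turn of that round.\<close>
record 'v gs_state =
  par :: "'v \<Rightarrow> 'v option"
  cl :: "'v \<Rightarrow> 'v list"
  cand :: "'v \<Rightarrow> 'v option"
  props :: "('v \<times> 'v) set"

definition gs_init :: "('v \<Rightarrow> 'v list) \<Rightarrow> 'v gs_state" where
  "gs_init pl = \<lparr> par = (\<lambda>_. None), cl = pl, cand = (\<lambda>_. None), props = {} \<rparr>"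

definition best :: "('v \<Rightarrow> 'v list) \<Rightarrow> 'v \<Rightarrow> 'v set \<Rightarrow> 'v" where
  "best pl b Q = (THE q. q \<in> Q \<and> (\<forall>q' \<in> Q. q' \<noteq> q \<longrightarrow> prefers pl b q q'))"

definition proposers :: "'v gs_state \<Rightarrow> 'v \<Rightarrow> 'v set" where
  "proposers s b = {r. (r, b) \<in> props s}"

definition bq :: "('v \<Rightarrow> 'v list) \<Rightarrow> 'v gs_state \<Rightarrow> 'v \<Rightarrow> 'v" where
  "bq pl s b = best pl b (proposers s b \<union> set_option (par s b))"

text \<open>Blue turn: new partners of blue nodes and the messages (sender b, receiver r, kind).\<close>
definition blue_par :: "'v set \<Rightarrow> ('v \<Rightarrow> 'v list) \<Rightarrow> 'v gs_state \<Rightarrow> 'v \<Rightarrow> 'v option" where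
  "blue_par B pl s v =
     (if v \<in> B \<and> proposers s v \<noteq> {} \<and> Some (bq pl s v) \<noteq> par s v
      then Some (bq pl s v) else par s v)"

definition blue_msgs :: "'v set \<Rightarrow> ('v \<Rightarrow> 'v list) \<Rightarrow> 'v gs_state \<Rightarrow> ('v \<times> 'v \<times> msg) set" where
  "blue_msgs B pl s =
     {(b, r, Break) | b r. b \<in> B \<and> proposers s b \<noteq> {} \<and> Some (bq pl s b) \<noteq> par s b
                           \<and> par s b = Some r}
   \<union> {(b, r, Accept) | b r. b \<in> B \<and> proposers s b \<noteq> {} \<and> Some (bq pl s b) \<noteq> par s b
                           \<and> r = bq pl s b}
   \<union> {(b, r, Reject) | b r. b \<in> B \<and> proposers s b \<noteq> {} \<and> r \<in> proposers s b - {bq pl s b}}"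

definition red_turn :: "('v \<times> 'v \<times> msg) set \<Rightarrow> 'v \<Rightarrow> 'v option \<Rightarrow> 'v list \<Rightarrow> 'v option
     \<Rightarrow> 'v option \<times> 'v list \<times> 'v option" where
  "red_turn M r p C c =
     (let (p1, C1) = (case c of None \<Rightarrow> (p, C)
                       | Some b \<Rightarrow> (if (b, r, Accept) \<in> M then Some b else p,
                                   if (b, r, Reject) \<in> M then removeAll b C else C));
          (p2, C2) = (case p1 of None \<Rightarrow> (p1, C1)
                       | Some b \<Rightarrow> (if (b, r, Break) \<in> M then (None, removeAll b C1) else (p1, C1)));
          c3 = (if p2 = None \<and> C2 \<noteq> [] then Some (hd C2) else None)
      in (p2, C2, c3))"

definition gs_round :: "'v set \<Rightarrow> 'v set \<Rightarrow> ('v \<Rightarrow> 'v list) \<Rightarrow> 'v gs_state \<Rightarrow> 'v gs_state" where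
  "gs_round R B pl s =
     (let M = blue_msgs B pl s;
          pb = blue_par B pl s;
          rt = (\<lambda>r. red_turn M r (pb r) (cl s r) (cand s r))
      in \<lparr> par = (\<lambda>v. if v \<in> R then fst (rt v) else pb v),
           cl = (\<lambda>v. if v \<in> R then fst (snd (rt v)) else cl s v),
           cand = (\<lambda>v. if v \<in> R then snd (snd (rt v)) else cand s v),
           props = {(r, b). r \<in> R \<and> snd (snd (rt r)) = Some b} \<rparr>)"

text \<open>State at the end of round i (round 0 = initial state).\<close>
primrec gs :: "'v set \<Rightarrow> 'v set \<Rightarrow> ('v \<Rightarrow> 'v list) \<Rightarrow> nat \<Rightarrow> 'v gs_state" where
  "gs R B pl 0 = gs_init pl"
| "gs R B pl (Suc i) = gs_round R B pl (gs R B pl i)"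

definition pot :: "('v set \<Rightarrow> int) \<Rightarrow> 'v gs_state \<Rightarrow> 'v \<Rightarrow> int" where
  "pot w s r = (if par s r \<noteq> None \<or> cl s r = [] then 0 else w {r, hd (cl s r)})"

definition potR :: "'v set \<Rightarrow> ('v set \<Rightarrow> int) \<Rightarrow> 'v gs_state \<Rightarrow> int" where
  "potR R w s = (\<Sum>r\<in>R. pot w s r)"

end

theory Submission
  imports Defs
begin

text \<open>The potential of the red nodes is only ever moved, never created.  A red node that
proposes is either accepted or loses at most the head of its list, which it weakly prefers
to the next entry, so its potential does not grow.  The only red node that can gain is one
dumped by its partner b in favour of a proposer r'; its new potential is at most
w {b, r} \<le> w {b, r'}, which is exactly the potential r' held before the round and gives
up now that b accepted it.  Distinct dumped red nodes charge distinct proposers.\<close>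

lemma hd_filter_precedes:
  assumes "y \<in> set (filter P xs)" "y \<noteq> hd (filter P xs)"
  shows "\<exists>i j. i < j \<and> j < length xs \<and> xs ! i = hd (filter P xs) \<and> xs ! j = y"
  using assms
proof (induction xs)
  case Nil
  then show ?case by simp
next
  case (Cons x xs)
  show ?case
  proof (cases "P x")
    case True
    with Cons.prems have "y \<in> set xs" by auto
    then obtain j where "j < length xs" "xs ! j = y" by (auto simp: in_set_conv_nth)
    with True show ?thesis by (intro exI[of _ 0] exI[of _ "Suc j"]) auto
  next
    case False
    with Cons obtain i j where "i < j" "j < length xs" "xs ! i = hd (filter P xs)" "xs ! j = y"
      by auto
    with False show ?thesis by (intro exI[of _ "Suc i"] exI[of _ "Suc j"]) auto
  qed
qed

lemma prefers_hd_filter: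
  "y \<in> set (filter P (pl v)) \<Longrightarrow> y \<noteq> hd (filter P (pl v)) \<Longrightarrow> prefers pl v (hd (filter P (pl v))) y"
  unfolding prefers_def by (rule hd_filter_precedes)

lemma prefers_asym:
  assumes "distinct (pl v)" "prefers pl v x y"
  shows "\<not> prefers pl v y x"
  using assms unfolding prefers_def by (auto simp: nth_eq_iff_index_eq)

lemma best_preferred:
  assumes "distinct (pl b)" "Q \<subseteq> set (pl b)" "Q \<noteq> {}"
  shows "best pl b Q \<in> Q \<and> (\<forall>q\<in>Q. q \<noteq> best pl b Q \<longrightarrow> prefers pl b (best pl b Q) q)"
  unfolding best_def
proof (rule theI')
  define q where "q = hd (filter (\<lambda>x. x \<in> Q) (pl b))"
  have "filter (\<lambda>x. x \<in> Q) (pl b) \<noteq> []"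
    using assms(2,3) by (auto simp: filter_empty_conv)
  then have "q \<in> Q" unfolding q_def using list.set_sel(1) by fastforce
  moreover have "prefers pl b q q'" if "q' \<in> Q" "q' \<noteq> q" for q'
    using that assms(2) unfolding q_def by (intro prefers_hd_filter) auto
  ultimately have q: "q \<in> Q \<and> (\<forall>q'\<in>Q. q' \<noteq> q \<longrightarrow> prefers pl b q q')" by blast
  show "\<exists>!q. q \<in> Q \<and> (\<forall>q'\<in>Q. q' \<noteq> q \<longrightarrow> prefers pl b q q')"
  proof (rule ex1I[of _ q])
    fix q' assume "q' \<in> Q \<and> (\<forall>q''\<in>Q. q'' \<noteq> q' \<longrightarrow> prefers pl b q' q'')"
    with q show "q' = q" using prefers_asym assms(1) by metis
  qed (rule q)
qed

lemma sum_mono_paired: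
  fixes f g :: "'a \<Rightarrow> 'b::ordered_comm_monoid_add"
  assumes "finite A" "S \<subseteq> A" "inj_on \<sigma> S" "\<sigma> ` S \<subseteq> A - S"
    and "\<And>x. x \<in> A - S - \<sigma> ` S \<Longrightarrow> f x \<le> g x"
    and "\<And>x. x \<in> S \<Longrightarrow> f x + f (\<sigma> x) \<le> g x + g (\<sigma> x)"
  shows "sum f A \<le> sum g A"
proof -
  have split: "sum h A = sum h (A - S - \<sigma> ` S) + (\<Sum>x\<in>S. h x + h (\<sigma> x))" for h :: "'a \<Rightarrow> 'b"
  proof -
    have fin: "finite S" using assms(1,2) finite_subset by blast
    have sub: "S \<union> \<sigma> ` S \<subseteq> A" using assms(2,4) by blast
    have "A - (S \<union> \<sigma> ` S) = A - S - \<sigma> ` S" by blast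
    then have "sum h A = sum h (A - S - \<sigma> ` S) + sum h (S \<union> \<sigma> ` S)"
      using sum.subset_diff[OF sub assms(1)] by simp
    also have "sum h (S \<union> \<sigma> ` S) = sum h S + sum h (\<sigma> ` S)"
      using assms(4) fin by (intro sum.union_disjoint) auto
    also have "sum h (\<sigma> ` S) = (\<Sum>x\<in>S. h (\<sigma> x))"
      using sum.reindex[OF assms(3)] by simp
    finally show ?thesis by (simp add: sum.distrib)
  qed
  show ?thesis
    unfolding split[of f] split[of g] using assms(5,6) by (intro add_mono[OF sum_mono sum_mono]) auto
qed

lemma cl_red_turn_filter: "\<exists>Q. fst (snd (red_turn M r p (filter P L) c)) = filter Q L"
  unfolding red_turn_def Let_def
  by (auto split: option.splits prod.splits if_splits simp: removeAll_filter_not_eq filter_filter)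

lemma cand_red_turn:
  "snd (snd (red_turn M r p C c)) =
     (if fst (red_turn M r p C c) = None \<and> fst (snd (red_turn M r p C c)) \<noteq> []
      then Some (hd (fst (snd (red_turn M r p C c)))) else None)"
  unfolding red_turn_def Let_def by (auto split: option.splits prod.splits if_splits)

lemma red_turn_no_cand:
  "red_turn M r p C None =
     (if p \<noteq> None \<and> (the p, r, Break) \<in> M
      then (None, removeAll (the p) C,
            if removeAll (the p) C \<noteq> [] then Some (hd (removeAll (the p) C)) else None)
      else (p, C, if p = None \<and> C \<noteq> [] then Some (hd C) else None))"
  unfolding red_turn_def Let_def by (auto split: option.splits prod.splits if_splits)

lemma par_red_turn_accept:
  "(b, r, Accept) \<in> M \<Longrightarrow> (b, r, Break) \<notin> M \<Longrightarrow> fst (red_turn M r None C (Some b)) = Some b"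
  unfolding red_turn_def Let_def by (auto split: option.splits prod.splits if_splits)

lemma red_turn_no_accept:
  "(b, r, Accept) \<notin> M \<Longrightarrow>
     fst (red_turn M r None C (Some b)) = None \<and>
     fst (snd (red_turn M r None C (Some b))) \<in> {C, removeAll b C}"
  unfolding red_turn_def Let_def by (auto split: option.splits prod.splits if_splits)

lemma red_turn_matched:
  assumes "fst (red_turn M r p C c) = Some b" "c \<noteq> None \<Longrightarrow> p = None"
    and "(b, r, Accept) \<in> M \<Longrightarrow> (b, r, Reject) \<notin> M"
  shows "fst (snd (red_turn M r p C c)) = C \<and> (c = Some b \<or> c = None \<and> p = Some b)"
  using assms unfolding red_turn_def Let_def by (auto split: option.splits prod.splits if_splits)

lemma blue_msgs_iff:
  "(b, r, Accept) \<in> blue_msgs B pl s \<longleftrightarrow>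
     b \<in> B \<and> proposers s b \<noteq> {} \<and> Some (bq pl s b) \<noteq> par s b \<and> r = bq pl s b"
  "(b, r, Reject) \<in> blue_msgs B pl s \<longleftrightarrow>
     b \<in> B \<and> proposers s b \<noteq> {} \<and> r \<in> proposers s b \<and> r \<noteq> bq pl s b"
  "(b, r, Break) \<in> blue_msgs B pl s \<longleftrightarrow>
     b \<in> B \<and> proposers s b \<noteq> {} \<and> Some (bq pl s b) \<noteq> par s b \<and> par s b = Some r"
  unfolding blue_msgs_def by auto

lemma accept_not_reject: "(b, r, Accept) \<in> blue_msgs B pl s \<Longrightarrow> (b, r, Reject) \<notin> blue_msgs B pl s"
  by (simp add: blue_msgs_iff)

lemma accept_not_break: "(b, r, Accept) \<in> blue_msgs B pl s \<Longrightarrow> (b, r, Break) \<notin> blue_msgs B pl s"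
  by (auto simp: blue_msgs_iff)

lemma bipartite_instance_disjoint: "bipartite_instance R B adj pl \<Longrightarrow> R \<inter> B = {}"
  unfolding bipartite_instance_def by auto

lemma gs_round_red:
  assumes "r \<in> R" "R \<inter> B = {}"
  shows "par (gs_round R B pl s) r = fst (red_turn (blue_msgs B pl s) r (par s r) (cl s r) (cand s r))"
    "cl (gs_round R B pl s) r = fst (snd (red_turn (blue_msgs B pl s) r (par s r) (cl s r) (cand s r)))"
    "cand (gs_round R B pl s) r = snd (snd (red_turn (blue_msgs B pl s) r (par s r) (cl s r) (cand s r)))"
  using assms unfolding gs_round_def Let_def blue_par_def by auto

lemma par_gs_round_blue:
  "b \<in> B \<Longrightarrow> R \<inter> B = {} \<Longrightarrow> par (gs_round R B pl s) b = blue_par B pl s b"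
  unfolding gs_round_def Let_def by auto

lemma props_gs_round:
  "props (gs_round R B pl s) = {(r, b). r \<in> R \<and> cand (gs_round R B pl s) r = Some b}"
  unfolding gs_round_def Let_def by auto

definition gs_inv ::
  "'v set \<Rightarrow> 'v set \<Rightarrow> ('v \<Rightarrow> 'v \<Rightarrow> bool) \<Rightarrow> ('v \<Rightarrow> 'v list) \<Rightarrow> 'v gs_state \<Rightarrow> bool" where
  "gs_inv R B adj pl s \<longleftrightarrow>
     (\<forall>r\<in>R. \<exists>P. cl s r = filter P (pl r)) \<and>
     (\<forall>r\<in>R. \<forall>b. par s r = Some b \<longrightarrow> cl s r \<noteq> [] \<and> hd (cl s r) = b) \<and>
     (\<forall>r\<in>R. \<forall>b. cand s r = Some b \<longrightarrow> par s r = None \<and> cl s r \<noteq> [] \<and> hd (cl s r) = b) \<and>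
     props s = {(r, b). r \<in> R \<and> cand s r = Some b} \<and>
     (\<forall>b\<in>B. \<forall>r. par s b = Some r \<longrightarrow> adj b r)"

lemma proposers_subset_pl:
  assumes bi: "bipartite_instance R B adj pl" and inv: "gs_inv R B adj pl s" and b: "b \<in> B"
  shows "proposers s b \<union> set_option (par s b) \<subseteq> set (pl b)"
proof
  fix r assume "r \<in> proposers s b \<union> set_option (par s b)"
  then consider "r \<in> R" "cand s r = Some b" | "par s b = Some r"
    using inv unfolding gs_inv_def proposers_def by auto
  then have "adj b r"
  proof cases
    case 1
    with inv obtain P where "cl s r = filter P (pl r)" "cl s r \<noteq> []" "hd (cl s r) = b"
      unfolding gs_inv_def by blast
    then have "b \<in> set (pl r)" by (metis filter_is_subset list.set_sel(1) subsetD)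
    with bi 1 show ?thesis unfolding bipartite_instance_def by auto
  next
    case 2
    with inv b show ?thesis unfolding gs_inv_def by auto
  qed
  with bi b show "r \<in> set (pl b)" unfolding bipartite_instance_def by auto
qed

lemma bq_preferred:
  assumes bi: "bipartite_instance R B adj pl" and inv: "gs_inv R B adj pl s" and b: "b \<in> B"
    and "proposers s b \<noteq> {}"
  shows "bq pl s b \<in> proposers s b \<union> set_option (par s b) \<and>
     (\<forall>q\<in>proposers s b \<union> set_option (par s b). q \<noteq> bq pl s b \<longrightarrow> prefers pl b (bq pl s b) q)"
  unfolding bq_def
proof (rule best_preferred)
  show "distinct (pl b)" using bi b unfolding bipartite_instance_def by auto
  show "proposers s b \<union> set_option (par s b) \<subseteq> set (pl b)" by (rule proposers_subset_pl[OF bi inv b])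
  show "proposers s b \<union> set_option (par s b) \<noteq> {}" using assms(4) by simp
qed

lemma gs_inv_init: "gs_inv R B adj pl (gs_init pl)"
  unfolding gs_inv_def gs_init_def by (auto intro: exI[of _ "\<lambda>_. True"])

lemma gs_inv_round:
  assumes bi: "bipartite_instance R B adj pl" and inv: "gs_inv R B adj pl s"
  shows "gs_inv R B adj pl (gs_round R B pl s)"
proof -
  have RB: "R \<inter> B = {}" using bipartite_instance_disjoint[OF bi] .
  let ?s = "gs_round R B pl s"
  have "\<exists>P. cl ?s r = filter P (pl r)" if r: "r \<in> R" for r
  proof -
    obtain P where "cl s r = filter P (pl r)" using inv r unfolding gs_inv_def by auto
    then show ?thesis using gs_round_red(2)[OF r RB] cl_red_turn_filter by metis
  qed
  moreover have "cl ?s r \<noteq> [] \<and> hd (cl ?s r) = b" if r: "r \<in> R" and p: "par ?s r = Some b" for r b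
  proof -
    have "cand s r \<noteq> None \<Longrightarrow> par s r = None" using inv r unfolding gs_inv_def by auto
    from red_turn_matched[OF p[unfolded gs_round_red(1)[OF r RB]] this accept_not_reject]
    have "cl ?s r = cl s r \<and> (cand s r = Some b \<or> cand s r = None \<and> par s r = Some b)"
      using gs_round_red(2)[OF r RB] by simp
    then show ?thesis using inv r unfolding gs_inv_def by auto
  qed
  moreover have "par ?s r = None \<and> cl ?s r \<noteq> [] \<and> hd (cl ?s r) = b"
    if "r \<in> R" "cand ?s r = Some b" for r b
    using that gs_round_red[OF that(1) RB]
      cand_red_turn[of "blue_msgs B pl s" r "par s r" "cl s r" "cand s r"]
    by (auto split: if_splits)
  moreover have "adj b r" if b: "b \<in> B" and p: "par ?s b = Some r" for b r
  proof (cases "proposers s b \<noteq> {} \<and> Some (bq pl s b) \<noteq> par s b")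
    case True
    then have "r = bq pl s b" using p par_gs_round_blue[OF b RB] b unfolding blue_par_def by auto
    then have "r \<in> set (pl b)"
      using bq_preferred[OF bi inv b] proposers_subset_pl[OF bi inv b] True by blast
    then show ?thesis using bi b unfolding bipartite_instance_def by auto
  next
    case False
    then have "par s b = Some r" using p par_gs_round_blue[OF b RB] b unfolding blue_par_def by auto
    then show ?thesis using inv b unfolding gs_inv_def by auto
  qed
  ultimately show ?thesis unfolding gs_inv_def using props_gs_round[of R B pl s] by blast
qed

lemma gs_inv_gs: "bipartite_instance R B adj pl \<Longrightarrow> gs_inv R B adj pl (gs R B pl i)"
  by (induction i) (auto intro: gs_inv_init gs_inv_round)

lemma hd_cl_in_pl:
  "gs_inv R B adj pl s \<Longrightarrow> r \<in> R \<Longrightarrow> cl s r \<noteq> [] \<Longrightarrow> hd (cl s r) \<in> set (pl r)"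
  unfolding gs_inv_def by (metis filter_is_subset list.set_sel(1) subsetD)

lemma pot_gs_round:
  fixes s :: "'v gs_state" and pl :: "'v \<Rightarrow> 'v list"
  assumes "R \<inter> B = {}" "r \<in> R"
  defines "t \<equiv> red_turn (blue_msgs B pl s) r (par s r) (cl s r) (cand s r)"
  shows "pot w (gs_round R B pl s) r =
    (if fst t \<noteq> None \<or> fst (snd t) = [] then 0 else w {r, hd (fst (snd t))})"
  unfolding pot_def t_def using gs_round_red[OF assms(2,1)] by simp

lemma weight_pos:
  assumes "bipartite_instance R B adj pl" "respects_prefs adj pl w" "r \<in> R" "b \<in> set (pl r)"
  shows "w {r, b} > 0"
  using assms unfolding bipartite_instance_def respects_prefs_def by auto

lemma weight_hd_removeAll_hd_le:
  assumes bi: "bipartite_instance R B adj pl" and resp: "respects_prefs adj pl w" and r: "r \<in> R"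
    and C: "C = filter P (pl r)" "removeAll (hd C) C \<noteq> []"
  shows "w {r, hd (removeAll (hd C) C)} \<le> w {r, hd C}"
proof -
  define y where "y = hd (removeAll (hd C) C)"
  have "y \<in> set (removeAll (hd C) C)" using C(2) unfolding y_def by (rule list.set_sel(1))
  then have y: "y \<in> set C" "y \<noteq> hd C" by auto
  then have "hd C \<in> set C" by (cases C) auto
  moreover have "set C \<subseteq> {u. adj r u}" using bi r C(1) unfolding bipartite_instance_def by auto
  moreover have "prefers pl r (hd C) y" using prefers_hd_filter y C(1) by metis
  ultimately show ?thesis using resp y(1) unfolding respects_prefs_def y_def by blast
qed

context
  fixes R B :: "'v set" and adj and pl and w :: "'v set \<Rightarrow> int" and s :: "'v gs_state"
  assumes bi: "bipartite_instance R B adj pl"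
    and resp: "respects_prefs adj pl w"
    and inv: "gs_inv R B adj pl s"
begin

lemma pot_nonneg: "r \<in> R \<Longrightarrow> 0 \<le> pot w s r"
  using weight_pos[OF bi resp] hd_cl_in_pl[OF inv] unfolding pot_def by (simp add: order_less_imp_le)

lemma pot_gs_round_le_hd:
  assumes r: "r \<in> R" and "cl s r \<noteq> []" and "par (gs_round R B pl s) r = None"
    and "cl (gs_round R B pl s) r \<in> {cl s r, removeAll (hd (cl s r)) (cl s r)}"
  shows "pot w (gs_round R B pl s) r \<le> w {r, hd (cl s r)}"
proof -
  obtain P where P: "cl s r = filter P (pl r)" using inv r unfolding gs_inv_def by auto
  show ?thesis
    using assms weight_pos[OF bi resp r hd_cl_in_pl[OF inv r]]
      weight_hd_removeAll_hd_le[OF bi resp r P] unfolding pot_def by auto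
qed

lemma pot_gs_round_le_unbroken:
  assumes r: "r \<in> R" and unbroken: "\<nexists>x. par s r = Some x \<and> (x, r, Break) \<in> blue_msgs B pl s"
  shows "pot w (gs_round R B pl s) r \<le> pot w s r"
proof -
  let ?M = "blue_msgs B pl s"
  let ?t = "red_turn ?M r (par s r) (cl s r) (cand s r)"
  have RB: "R \<inter> B = {}" using bipartite_instance_disjoint[OF bi] .
  show ?thesis
  proof (cases "par s r")
    case (Some x)
    moreover have "cand s r = None" using inv r Some unfolding gs_inv_def by auto
    ultimately have "fst ?t \<noteq> None" using unbroken by (simp add: red_turn_no_cand)
    then show ?thesis using pot_gs_round[OF RB r] pot_nonneg[OF r] by simp
  next
    case None
    show ?thesis
    proof (cases "cand s r")
      case None
      then have "fst ?t = None" "fst (snd ?t) = cl s r"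
        using \<open>par s r = None\<close> by (simp_all add: red_turn_no_cand)
      then show ?thesis using pot_gs_round[OF RB r] \<open>par s r = None\<close> unfolding pot_def by simp
    next
      case (Some b)
      then have cl: "cl s r \<noteq> []" "hd (cl s r) = b" using inv r unfolding gs_inv_def by auto
      have pot: "pot w s r = w {r, b}" using \<open>par s r = None\<close> cl unfolding pot_def by simp
      show ?thesis
      proof (cases "(b, r, Accept) \<in> ?M")
        case True
        then have "fst ?t = Some b"
          using par_red_turn_accept[OF True accept_not_break[OF True]] \<open>par s r = None\<close> Some by simp
        then show ?thesis using pot_gs_round[OF RB r] pot pot_nonneg[OF r] by simp
      next
        case False
        then show ?thesis
          using red_turn_no_accept[OF False] \<open>par s r = None\<close> Some cl pot
            pot_gs_round_le_hd[OF r cl(1)] gs_round_red[OF r RB] by simp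
      qed
    qed
  qed
qed

lemma broken_red_charges_new_partner:
  assumes r: "r \<in> R" and px: "par s r = Some x" and brk: "(x, r, Break) \<in> blue_msgs B pl s"
  defines "r' \<equiv> bq pl s x"
  shows "r' \<in> R" "cand s r' = Some x" "par s r' = None"
    "pot w (gs_round R B pl s) r + pot w (gs_round R B pl s) r' \<le> pot w s r + pot w s r'"
proof -
  let ?M = "blue_msgs B pl s"
  have RB: "R \<inter> B = {}" using bipartite_instance_disjoint[OF bi] .
  have x: "x \<in> B" "proposers s x \<noteq> {}" "Some r' \<noteq> par s x" "par s x = Some r"
    using brk unfolding blue_msgs_iff r'_def by blast+
  have "r' \<in> proposers s x \<and> prefers pl x r' r"
    using bq_preferred[OF bi inv x(1,2)] x(3,4) unfolding r'_def by auto
  then have r': "r' \<in> R" "cand s r' = Some x" and pref: "prefers pl x r' r"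
    using inv unfolding gs_inv_def proposers_def by auto
  then have r'_par: "par s r' = None" and r'_cl: "cl s r' \<noteq> []" "hd (cl s r') = x"
    using inv unfolding gs_inv_def by auto
  show "r' \<in> R" "cand s r' = Some x" "par s r' = None" by (fact r' r'_par)+
  have acc: "(x, r', Accept) \<in> ?M" using x unfolding blue_msgs_iff r'_def by simp
  have "par (gs_round R B pl s) r' = Some x"
    using gs_round_red(1)[OF r'(1) RB] r'_par r'(2)
      par_red_turn_accept[OF acc accept_not_break[OF acc]]
    by simp
  then have pot_r': "pot w (gs_round R B pl s) r' = 0" unfolding pot_def by simp
  have cl: "cl s r \<noteq> []" "hd (cl s r) = x" and "cand s r = None"
    using inv r px unfolding gs_inv_def by auto
  then have "par (gs_round R B pl s) r = None"
    "cl (gs_round R B pl s) r = removeAll (hd (cl s r)) (cl s r)"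
    using gs_round_red[OF r RB] px brk by (simp_all add: red_turn_no_cand)
  then have "pot w (gs_round R B pl s) r \<le> w {x, r}"
    using pot_gs_round_le_hd[OF r cl(1)] cl(2) by (simp add: insert_commute)
  also have "\<dots> \<le> w {x, r'}"
  proof -
    have "adj x r" using inv x(1,4) unfolding gs_inv_def by auto
    moreover have "adj x r'"
      using proposers_subset_pl[OF bi inv x(1)] \<open>r' \<in> proposers s x \<and> _\<close> bi x(1)
      unfolding bipartite_instance_def by auto
    ultimately show ?thesis using resp pref unfolding respects_prefs_def by auto
  qed
  also have "\<dots> = pot w s r'" using r'_par r'_cl unfolding pot_def by (simp add: insert_commute)
  finally show "pot w (gs_round R B pl s) r + pot w (gs_round R B pl s) r' \<le> pot w s r + pot w s r'"
    using pot_r' px unfolding pot_def by simp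
qed

lemma potR_gs_round_le: "potR R w (gs_round R B pl s) \<le> potR R w s"
proof -
  define broken
    where "broken = {r \<in> R. \<exists>x. par s r = Some x \<and> (x, r, Break) \<in> blue_msgs B pl s}"
  define \<sigma> where "\<sigma> r = bq pl s (the (par s r))" for r
  have charge: "\<sigma> r \<in> R" "cand s (\<sigma> r) = Some (the (par s r))" "par s (\<sigma> r) = None"
    "pot w (gs_round R B pl s) r + pot w (gs_round R B pl s) (\<sigma> r) \<le> pot w s r + pot w s (\<sigma> r)"
    if "r \<in> broken" for r
    using that broken_red_charges_new_partner unfolding broken_def \<sigma>_def by auto
  have "inj_on \<sigma> broken"
  proof
    fix r1 r2 assume r: "r1 \<in> broken" "r2 \<in> broken" "\<sigma> r1 = \<sigma> r2"
    then have "the (par s r1) = the (par s r2)" using charge(2) by (metis option.inject)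
    with r(1,2) obtain x where "par s r1 = Some x" "par s r2 = Some x"
      unfolding broken_def by force
    with r show "r1 = r2" unfolding broken_def by (auto simp: blue_msgs_iff)
  qed
  moreover have "finite R" using bi unfolding bipartite_instance_def by auto
  moreover have "\<sigma> ` broken \<subseteq> R - broken" using charge(1,3) unfolding broken_def by auto
  ultimately show ?thesis
    unfolding potR_def using charge(4) pot_gs_round_le_unbroken
    by (intro sum_mono_paired[of R broken]) (auto simp: broken_def)
qed

end

lemma potR_gs_Suc_le:
  assumes "bipartite_instance R B adj pl" "respects_prefs adj pl w"
  shows "potR R w (gs R B pl (Suc i)) \<le> potR R w (gs R B pl i)"
  using potR_gs_round_le[OF assms gs_inv_gs[OF assms(1)]] by simp

theorem lemma3:
  fixes R B :: "'v set" and adj :: "'v \<Rightarrow> 'v \<Rightarrow> bool" and pl :: "'v \<Rightarrow> 'v list"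
    and w :: "'v set \<Rightarrow> int" and i :: nat
  assumes "bipartite_instance R B adj pl"
    and "respects_prefs adj pl w"
    and "i \<ge> 2"
  shows "potR R w (gs R B pl i) \<le> potR R w (gs R B pl (i - 1))"
  using potR_gs_Suc_le[OF assms(1,2), of "i - 1"] assms(3) by simp

end
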